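(* Let $X$ be an $X$-set parameter and let $G$ and $G'$ be graphs with no isolated vertices. Suppose $\varphi:\mathscr{X}^{\rm TAR}(G)\to\mathscr{X}^{\rm TAR}(G')$ is a graph isomorphism such that $|\varphi(S)|=|S|$ for every $X$-set $S$ of $G$. Then $\varphi$ maps minimal $X$-sets of $G$ to minimal $X$-sets of $G'$ of the same size.
   Context: All graphs are simple, finite, with nonempty vertex set. An $X$-set parameter is a graph parameter $X(G)$ defined as the minimum cardinality of an $X$-set of $G$, where the $X$-sets of each graph are subsets of its vertex set determined by some property satisfying: (1) supersets (within $V(G)$) of $X$-sets are $X$-sets; (2) the empty set is never an $X$-set; (3) an $X$-set of a disconnected graph is the union of an $X$-set of each component; (4) if $G$ has no isolated vertices, every set of $|V(G)|-1$ vertices is an $X$-set. The $X$-TAR graph $\mathscr{X}^{\rm TAR}(G)$ has as vertices all $X$-sets of $G$, with $S_1,S_2$ adjacent iff $|S_1\ominus S_2|=1$ (symmetric difference). A minimal $X$-set is one containing no proper subset that is an $X$-set. *)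

theory Defs
  imports Main
begin

type_synonym 'a graph = "'a set \<times> 'a set set"

definition verts :: "'a graph \<Rightarrow> 'a set" where "verts G = fst G"
definition edges :: "'a graph \<Rightarrow> 'a set set" where "edges G = snd G"

definition is_graph :: "'a graph \<Rightarrow> bool" where
  "is_graph G \<longleftrightarrow> finite (verts G) \<and> verts G \<noteq> {} \<and>
     (\<forall>e\<in>edges G. e \<subseteq> verts G \<and> card e = 2)"

definition no_isolated :: "'a graph \<Rightarrow> bool" where
  "no_isolated G \<longleftrightarrow> (\<forall>v\<in>verts G. \<exists>e\<in>edges G. v \<in> e)"

definition adj_rel :: "'a graph \<Rightarrow> ('a \<times> 'a) set" where
  "adj_rel G = {(u, v). {u, v} \<in> edges G}"

definition comp_verts :: "'a graph \<Rightarrow> 'a \<Rightarrow> 'a set" where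
  "comp_verts G v = {u \<in> verts G. (v, u) \<in> (adj_rel G)\<^sup>*}"

definition induced :: "'a graph \<Rightarrow> 'a set \<Rightarrow> 'a graph" where
  "induced G C = (C, {e \<in> edges G. e \<subseteq> C})"

definition components :: "'a graph \<Rightarrow> 'a graph set" where
  "components G = {induced G (comp_verts G v) | v. v \<in> verts G}"

definition Xset_param :: "('a graph \<Rightarrow> 'a set set) \<Rightarrow> bool" where
  "Xset_param Xs \<longleftrightarrow>
     (\<forall>G. is_graph G \<longrightarrow> Xs G \<subseteq> Pow (verts G)) \<and>
     (\<forall>G S T. is_graph G \<longrightarrow> S \<in> Xs G \<longrightarrow> S \<subseteq> T \<longrightarrow> T \<subseteq> verts G \<longrightarrow> T \<in> Xs G) \<and>
     (\<forall>G. is_graph G \<longrightarrow> {} \<notin> Xs G) \<and>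
     (\<forall>G S. is_graph G \<longrightarrow> S \<subseteq> verts G \<longrightarrow>
        (S \<in> Xs G \<longleftrightarrow> (\<forall>C\<in>components G. S \<inter> verts C \<in> Xs C))) \<and>
     (\<forall>G. is_graph G \<longrightarrow> no_isolated G \<longrightarrow>
        (\<forall>S. S \<subseteq> verts G \<longrightarrow> card S = card (verts G) - 1 \<longrightarrow> S \<in> Xs G))"

definition sym_diff :: "'a set \<Rightarrow> 'a set \<Rightarrow> 'a set" where
  "sym_diff A B = (A - B) \<union> (B - A)"

text \<open>Adjacency in the X-TAR graph (whose vertex set is Xs G).\<close>
definition tar_adj :: "'a set \<Rightarrow> 'a set \<Rightarrow> bool" where
  "tar_adj S T \<longleftrightarrow> card (sym_diff S T) = 1"

definition tar_iso ::
  "('a graph \<Rightarrow> 'a set set) \<Rightarrow> 'a graph \<Rightarrow> 'a graph \<Rightarrow> ('a set \<Rightarrow> 'a set) \<Rightarrow> bool" where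
  "tar_iso Xs G G' \<phi> \<longleftrightarrow> bij_betw \<phi> (Xs G) (Xs G') \<and>
     (\<forall>S\<in>Xs G. \<forall>T\<in>Xs G. tar_adj S T \<longleftrightarrow> tar_adj (\<phi> S) (\<phi> T))"

definition minimal_Xset :: "('a graph \<Rightarrow> 'a set set) \<Rightarrow> 'a graph \<Rightarrow> 'a set \<Rightarrow> bool" where
  "minimal_Xset Xs G S \<longleftrightarrow> S \<in> Xs G \<and> (\<forall>T. T \<subset> S \<longrightarrow> T \<notin> Xs G)"

end

theory Submission
  imports Defs
begin

text \<open>Since X-sets are closed under supersets, an X-set S is minimal iff no set
  S - {x} is an X-set, i.e. iff S has no smaller neighbour in the X-TAR graph.
  This characterization involves only the X-TAR graph and cardinalities, both of
  which \<open>\<phi>\<close> preserves.\<close>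

lemma tar_adj_Diff_singleton:
  assumes "x \<in> S"
  shows "tar_adj S (S - {x})"
proof -
  have "sym_diff S (S - {x}) = {x}"
    using assms unfolding sym_diff_def by auto
  then show ?thesis
    unfolding tar_adj_def by simp
qed

lemma tar_adj_card_less_imp_Diff_singleton:
  assumes "tar_adj A B" and "card B < card A"
  obtains x where "x \<in> A" and "B = A - {x}"
proof -
  obtain z where z: "sym_diff A B = {z}"
    using assms(1) unfolding tar_adj_def One_nat_def card_1_singleton_iff by blast
  then have z_iff: "z \<in> A \<longleftrightarrow> z \<notin> B"
    unfolding sym_diff_def by fastforce
  have "A - B \<subseteq> {z}" and "B - A \<subseteq> {z}"
    using z unfolding sym_diff_def by blast+
  have "finite A"
    using assms(2) card.infinite by force
  show thesis
  proof (cases "z \<in> A")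
    case True
    with z_iff \<open>A - B \<subseteq> {z}\<close> \<open>B - A \<subseteq> {z}\<close> have "B = A - {z}"
      by blast
    with True show thesis
      by (rule that)
  next
    case False
    with \<open>A - B \<subseteq> {z}\<close> have "A \<subseteq> B"
      by blast
    moreover have "finite B"
      using \<open>finite A\<close> \<open>B - A \<subseteq> {z}\<close> finite_subset[of B "insert z A"] by blast
    ultimately have "card A \<le> card B"
      by (rule card_mono[rotated])
    with assms(2) show thesis
      by simp
  qed
qed

lemma Xset_param_subset_verts:
  assumes "Xset_param Xs" and "is_graph G" and "S \<in> Xs G"
  shows "S \<subseteq> verts G"
  using assms(1) unfolding Xset_param_def by (metis PowD assms(2,3) subsetD)

lemma Xset_param_superset:
  assumes "Xset_param Xs" and "is_graph G"
    and "S \<in> Xs G" and "S \<subseteq> T" and "T \<subseteq> verts G"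
  shows "T \<in> Xs G"
  using assms(1) unfolding Xset_param_def by (metis assms(2-5))

lemma Xset_param_finite:
  assumes "Xset_param Xs" and "is_graph G" and "S \<in> Xs G"
  shows "finite S"
proof (rule finite_subset)
  show "S \<subseteq> verts G"
    using assms by (rule Xset_param_subset_verts)
  show "finite (verts G)"
    using assms(2) unfolding is_graph_def by blast
qed

lemma minimal_Xset_iff_no_Diff_singleton:
  assumes "Xset_param Xs" and "is_graph G"
  shows "minimal_Xset Xs G S \<longleftrightarrow> S \<in> Xs G \<and> (\<forall>x\<in>S. S - {x} \<notin> Xs G)"
proof
  assume "minimal_Xset Xs G S"
  then show "S \<in> Xs G \<and> (\<forall>x\<in>S. S - {x} \<notin> Xs G)"
    unfolding minimal_Xset_def by blast
next
  assume S: "S \<in> Xs G \<and> (\<forall>x\<in>S. S - {x} \<notin> Xs G)"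
  have "T \<notin> Xs G" if "T \<subset> S" for T
  proof
    assume "T \<in> Xs G"
    obtain x where "x \<in> S" and "x \<notin> T"
      using \<open>T \<subset> S\<close> by blast
    have "S - {x} \<subseteq> verts G"
      using Xset_param_subset_verts[OF assms] S by blast
    with \<open>T \<subset> S\<close> \<open>x \<notin> T\<close> have "S - {x} \<in> Xs G"
      by (intro Xset_param_superset[OF assms \<open>T \<in> Xs G\<close>]) auto
    with S \<open>x \<in> S\<close> show False by blast
  qed
  with S show "minimal_Xset Xs G S"
    unfolding minimal_Xset_def by blast
qed

lemma minimal_Xset_iff_no_smaller_tar_neighbour:
  assumes "Xset_param Xs" and "is_graph G"
  shows "minimal_Xset Xs G S \<longleftrightarrow>
    S \<in> Xs G \<and> (\<forall>T\<in>Xs G. tar_adj S T \<longrightarrow> card S \<le> card T)"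
proof -
  have "(\<forall>x\<in>S. S - {x} \<notin> Xs G) \<longleftrightarrow> (\<forall>T\<in>Xs G. tar_adj S T \<longrightarrow> card S \<le> card T)"
    if "S \<in> Xs G"
  proof
    assume no_deletion: "\<forall>x\<in>S. S - {x} \<notin> Xs G"
    show "\<forall>T\<in>Xs G. tar_adj S T \<longrightarrow> card S \<le> card T"
    proof (intro ballI impI leI notI)
      fix T assume "T \<in> Xs G" "tar_adj S T" "card T < card S"
      then obtain x where "x \<in> S" "T = S - {x}"
        using tar_adj_card_less_imp_Diff_singleton by blast
      with no_deletion \<open>T \<in> Xs G\<close> show False by blast
    qed
  next
    assume no_smaller: "\<forall>T\<in>Xs G. tar_adj S T \<longrightarrow> card S \<le> card T"
    have "finite S"
      by (rule Xset_param_finite[OF assms that])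
    show "\<forall>x\<in>S. S - {x} \<notin> Xs G"
    proof (intro ballI notI)
      fix x assume "x \<in> S" and "S - {x} \<in> Xs G"
      moreover from \<open>x \<in> S\<close> have "tar_adj S (S - {x})"
        by (rule tar_adj_Diff_singleton)
      ultimately have "card S \<le> card (S - {x})"
        using no_smaller by blast
      with card_Diff1_less[OF \<open>finite S\<close> \<open>x \<in> S\<close>] show False
        by simp
    qed
  qed
  then show ?thesis
    using minimal_Xset_iff_no_Diff_singleton[OF assms] by blast
qed

theorem proposition2p14:
  fixes Xs :: "'a graph \<Rightarrow> 'a set set" and G G' :: "'a graph"
    and \<phi> :: "'a set \<Rightarrow> 'a set"
  assumes "Xset_param Xs"
    and "is_graph G" and "is_graph G'"
    and "no_isolated G" and "no_isolated G'"
    and "tar_iso Xs G G' \<phi>"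
    and "\<forall>S\<in>Xs G. card (\<phi> S) = card S"
  shows "\<forall>S. minimal_Xset Xs G S \<longrightarrow> minimal_Xset Xs G' (\<phi> S) \<and> card (\<phi> S) = card S"
proof (intro allI impI)
  fix S assume "minimal_Xset Xs G S"
  then have S: "S \<in> Xs G" "\<forall>T\<in>Xs G. tar_adj S T \<longrightarrow> card S \<le> card T"
    using minimal_Xset_iff_no_smaller_tar_neighbour[OF assms(1,2)] by blast+
  have bij: "bij_betw \<phi> (Xs G) (Xs G')"
    and adj: "\<forall>S\<in>Xs G. \<forall>T\<in>Xs G. tar_adj S T \<longleftrightarrow> tar_adj (\<phi> S) (\<phi> T)"
    using assms(6) unfolding tar_iso_def by blast+
  have "\<forall>T'\<in>Xs G'. tar_adj (\<phi> S) T' \<longrightarrow> card (\<phi> S) \<le> card T'"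
  proof (intro ballI impI)
    fix T' assume "T' \<in> Xs G'" "tar_adj (\<phi> S) T'"
    then obtain T where T: "T \<in> Xs G" "T' = \<phi> T"
      using bij unfolding bij_betw_def by blast
    with adj S(1) \<open>tar_adj (\<phi> S) T'\<close> have "tar_adj S T"
      by blast
    with S T have "card S \<le> card T"
      by blast
    with S(1) T assms(7) show "card (\<phi> S) \<le> card T'"
      by simp
  qed
  moreover have "\<phi> S \<in> Xs G'"
    using bij S(1) bij_betwE by blast
  ultimately show "minimal_Xset Xs G' (\<phi> S) \<and> card (\<phi> S) = card S"
    using minimal_Xset_iff_no_smaller_tar_neighbour[OF assms(1,3)] assms(7) S(1) by blast
qed

end
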